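(* Let $(X,\mathcal{B},\mu)$ be a $\sigma$-finite measure space and let $\varphi:X\to X$ be a measurable map for which there is $c>0$ with $\mu(\varphi^{-1}(B))\le c\,\mu(B)$ for all $B\in\mathcal{B}$. For $1\le q<\infty$ let $T_\varphi$ denote the composition operator $f\mapsto f\circ\varphi$ on $L^q(X,\mathcal{B},\mu)$. Then for any $p,p'\in[1,\infty)$, $T_\varphi$ is distributionally chaotic on $L^p(X,\mathcal{B},\mu)$ if and only if $T_\varphi$ is distributionally chaotic on $L^{p'}(X,\mathcal{B},\mu)$.
   Context: For $A\subseteq\mathbb{N}$, $\overline{\mathrm{dens}}(A)=\limsup_{N\to\infty}\frac{\operatorname{card}(A\cap[1,N])}{N}$ and $\underline{\mathrm{dens}}(A)=\liminf_{N\to\infty}\frac{\operatorname{card}(A\cap[1,N])}{N}$. An operator $T$ on a Banach space $Y$ is distributionally chaotic if there exist an uncountable set $\Gamma\subset Y$ and $\varepsilon>0$ such that for every $\delta>0$ and every pair of distinct $x,y\in\Gamma$: $\underline{\mathrm{dens}}\{j\in\mathbb{N}:\|T^jx-T^jy\|<\varepsilon\}=0$ and $\overline{\mathrm{dens}}\{j\in\mathbb{N}:\|T^jx-T^jy\|<\delta\}=1$. *)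

theory Defs
  imports "HOL-Analysis.Analysis"
begin

definition upper_dens :: "nat set \<Rightarrow> ereal" where
  "upper_dens A = limsup (\<lambda>N. ereal (real (card (A \<inter> {1..N})) / real N))"

definition lower_dens :: "nat set \<Rightarrow> ereal" where
  "lower_dens A = liminf (\<lambda>N. ereal (real (card (A \<inter> {1..N})) / real N))"

definition distr_chaotic :: "'b set \<Rightarrow> ('b \<Rightarrow> 'b \<Rightarrow> real) \<Rightarrow> ('b \<Rightarrow> 'b) \<Rightarrow> bool" where
  "distr_chaotic Y d T \<longleftrightarrow>
     (\<exists>\<Gamma>. \<Gamma> \<subseteq> Y \<and> uncountable \<Gamma> \<and>
       (\<exists>\<epsilon>>0. \<forall>\<delta>>0. \<forall>x\<in>\<Gamma>. \<forall>y\<in>\<Gamma>. x \<noteq> y \<longrightarrow>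
          lower_dens {j. d ((T^^j) x) ((T^^j) y) < \<epsilon>} = 0 \<and>
          upper_dens {j. d ((T^^j) x) ((T^^j) y) < \<delta>} = 1))"

definition lp_space :: "'a measure \<Rightarrow> real \<Rightarrow> ('a \<Rightarrow> real) set" where
  "lp_space M p = {f \<in> borel_measurable M. (\<integral>\<^sup>+ x. ennreal (\<bar>f x\<bar> powr p) \<partial>M) < \<infinity>}"

definition lp_norm :: "'a measure \<Rightarrow> real \<Rightarrow> ('a \<Rightarrow> real) \<Rightarrow> real" where
  "lp_norm M p f = (enn2real (\<integral>\<^sup>+ x. ennreal (\<bar>f x\<bar> powr p) \<partial>M)) powr (1 / p)"

definition comp_op :: "('a \<Rightarrow> 'a) \<Rightarrow> ('a \<Rightarrow> real) \<Rightarrow> ('a \<Rightarrow> real)" where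
  "comp_op \<phi> f = f \<circ> \<phi>"

definition comp_op_distr_chaotic_Lp :: "'a measure \<Rightarrow> real \<Rightarrow> ('a \<Rightarrow> 'a) \<Rightarrow> bool" where
  "comp_op_distr_chaotic_Lp M p \<phi> =
     distr_chaotic (lp_space M p) (\<lambda>f g. lp_norm M p (\<lambda>x. f x - g x)) (comp_op \<phi>)"

end

theory Submission
  imports Defs
begin

(* Distributional chaos of T_phi on L^p is a property of the orbit integrals
   s_j = \<integral> u (phi^j x) dx of a single integrable function u \<ge> 0.  For two points f, g of a
   scrambled set, u = |f - g|^p has s_j \<ge> e on a set of upper density one and s_j < \<delta> on a set
   of upper density one, for every \<delta> > 0.  Conversely, if the orbit integrals of some
   integrable v \<ge> 0 exceed every bound on sets of upper density one and fall below every \<delta> > 0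
   on sets of upper density one, then {l v^(1/q) | 0 \<le> l \<le> 1} is scrambled in L^q: the distance
   of the j-th iterates of l v^(1/q) and m v^(1/q) is |l - m| (\<integral> v (phi^j x) dx)^(1/q).
   Neither property mentions the exponent.

   The step from "at least e" to "unbounded" takes v = \<Sum>_i w_i u o phi^(n_i) with weights
   w_i \<rightarrow> \<infinity>.  Since mu(phi^-1 B) \<le> c mu(B) gives s_(j+n) \<le> c^j s_n, each shift n_i can be
   placed where the orbit integrals of u stay tiny along a whole window of times, so that the
   tail of the series is negligible before that window ends. *)

section \<open>Sets of upper density one\<close>

lemma le_Limsup_iff_frequently:
  fixes X :: "_ \<Rightarrow> _ :: {complete_linorder, dense_linorder}"
  shows "C \<le> Limsup F X \<longleftrightarrow> (\<forall>y<C. \<exists>\<^sub>F x in F. y < X x)"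
proof
  assume le: "C \<le> Limsup F X"
  show "\<forall>y<C. \<exists>\<^sub>F x in F. y < X x"
  proof (intro allI impI)
    fix y assume "y < C"
    show "\<exists>\<^sub>F x in F. y < X x"
    proof (rule ccontr)
      assume "\<not> (\<exists>\<^sub>F x in F. y < X x)"
      then have "Limsup F X \<le> y"
        by (intro Limsup_bounded) (simp add: not_frequently not_less)
      with le \<open>y < C\<close> show False by simp
    qed
  qed
next
  assume freq: "\<forall>y<C. \<exists>\<^sub>F x in F. y < X x"
  show "C \<le> Limsup F X"
  proof (rule ccontr)
    assume "\<not> C \<le> Limsup F X"
    then have "Limsup F X < C" by (simp add: not_le)
    then obtain y where y: "Limsup F X < y" "y < C"
      using dense by blast
    have "\<forall>\<^sub>F x in F. \<not> y < X x"
      using Limsup_lessD[OF y(1)] by (rule eventually_mono) simp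
    with freq y(2) show False by (simp add: frequently_def)
  qed
qed

lemma Liminf_le_iff_frequently:
  fixes X :: "_ \<Rightarrow> _ :: {complete_linorder, dense_linorder}"
  shows "Liminf F X \<le> C \<longleftrightarrow> (\<forall>y>C. \<exists>\<^sub>F x in F. X x < y)"
proof
  assume le: "Liminf F X \<le> C"
  show "\<forall>y>C. \<exists>\<^sub>F x in F. X x < y"
  proof (intro allI impI)
    fix y assume "C < y"
    show "\<exists>\<^sub>F x in F. X x < y"
    proof (rule ccontr)
      assume "\<not> (\<exists>\<^sub>F x in F. X x < y)"
      then have "y \<le> Liminf F X"
        by (intro Liminf_bounded) (simp add: not_frequently not_less)
      with le \<open>C < y\<close> show False by simp
    qed
  qed
next
  assume freq: "\<forall>y>C. \<exists>\<^sub>F x in F. X x < y"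
  show "Liminf F X \<le> C"
  proof (rule ccontr)
    assume "\<not> Liminf F X \<le> C"
    then have "C < Liminf F X" by (simp add: not_le)
    then obtain y where y: "C < y" "y < Liminf F X"
      using dense by blast
    have "\<forall>\<^sub>F x in F. \<not> X x < y"
      using less_LiminfD[OF y(2)] by (rule eventually_mono) simp
    with freq y(1) show False by (simp add: frequently_def)
  qed
qed

lemma real_card_diff_atLeastAtMost:
  "real (card ({1..N} - A)) = real N - real (card (A \<inter> {1..N}))"
  using card_mono[of "{1..N}" "A \<inter> {1..N}"]
  by (simp add: card_Diff_subset_Int Int_commute of_nat_diff)

lemma upper_dens_eq_1_iff:
  "upper_dens A = 1 \<longleftrightarrow> (\<forall>\<eta>>0. \<exists>\<^sub>F N in sequentially. real (card ({1..N} - A)) < \<eta> * real N)"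
proof -
  define X where "X N = ereal (real (card (A \<inter> {1..N})) / real N)" for N
  have "X N \<le> 1" for N
    using card_mono[of "{1..N}" "A \<inter> {1..N}"] by (cases "N = 0") (auto simp: X_def)
  then have "Limsup sequentially X \<le> 1"
    by (intro Limsup_bounded always_eventually) simp
  then have "upper_dens A = 1 \<longleftrightarrow> 1 \<le> Limsup sequentially X"
    unfolding upper_dens_def X_def[symmetric] by auto
  also have "\<dots> \<longleftrightarrow> (\<forall>\<eta>>0. \<exists>\<^sub>F N in sequentially. ereal (1 - \<eta>) < X N)"
    unfolding le_Limsup_iff_frequently
  proof safe
    fix y :: ereal assume "\<forall>\<eta>>0. \<exists>\<^sub>F N in sequentially. ereal (1 - \<eta>) < X N" "y < 1"
    moreover obtain z where "y < ereal z" "ereal z < 1" using ereal_dense2[OF \<open>y < 1\<close>] by blast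
    ultimately show "\<exists>\<^sub>F N in sequentially. y < X N"
      by (auto elim!: allE[of _ "1 - z"] elim: frequently_elim1)
  qed simp
  also have "\<dots> \<longleftrightarrow> (\<forall>\<eta>>0. \<exists>\<^sub>F N in sequentially. real (card ({1..N} - A)) < \<eta> * real N)"
    by (intro all_cong1 imp_cong refl frequently_cong[OF eventually_gt_at_top[of 0]])
      (simp only: X_def real_card_diff_atLeastAtMost, simp add: field_simps)
  finally show ?thesis .
qed

lemma lower_dens_eq_0_iff: "lower_dens A = 0 \<longleftrightarrow> upper_dens (- A) = 1"
proof -
  define X where "X N = ereal (real (card (A \<inter> {1..N})) / real N)" for N
  have "0 \<le> Liminf sequentially X"
    by (intro Liminf_bounded always_eventually) (simp add: X_def)
  then have "lower_dens A = 0 \<longleftrightarrow> Liminf sequentially X \<le> 0"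
    unfolding lower_dens_def X_def[symmetric] by auto
  also have "\<dots> \<longleftrightarrow> (\<forall>\<eta>>0. \<exists>\<^sub>F N in sequentially. X N < ereal \<eta>)"
    unfolding Liminf_le_iff_frequently
  proof safe
    fix y :: ereal assume "\<forall>\<eta>>0. \<exists>\<^sub>F N in sequentially. X N < ereal \<eta>" "0 < y"
    moreover obtain z where "0 < ereal z" "ereal z < y" using ereal_dense2[OF \<open>0 < y\<close>] by blast
    ultimately show "\<exists>\<^sub>F N in sequentially. X N < y"
      by (auto elim!: allE[of _ z] elim: frequently_elim1)
  qed simp
  also have "\<dots> \<longleftrightarrow> upper_dens (- A) = 1"
    unfolding upper_dens_eq_1_iff Diff_Compl
    by (intro all_cong1 imp_cong refl frequently_cong[OF eventually_gt_at_top[of 0]])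
      (simp add: X_def Int_commute field_simps)
  finally show ?thesis .
qed

lemma upper_dens_eq_1_mono:
  assumes "upper_dens A = 1" and "A \<subseteq> B"
  shows "upper_dens B = 1"
  unfolding upper_dens_eq_1_iff
proof (intro allI impI)
  fix \<eta> :: real assume "0 < \<eta>"
  with assms(1) have "\<exists>\<^sub>F N in sequentially. real (card ({1..N} - A)) < \<eta> * real N"
    unfolding upper_dens_eq_1_iff by blast
  moreover have "card ({1..N} - B) \<le> card ({1..N} - A)" for N
    using assms(2) by (intro card_mono) auto
  ultimately show "\<exists>\<^sub>F N in sequentially. real (card ({1..N} - B)) < \<eta> * real N"
    by (elim frequently_elim1) (meson of_nat_le_iff le_less_trans)
qed

lemma upper_dens_eq_1_frequently:
  assumes "upper_dens A = 1"
  shows "\<exists>\<^sub>F j in sequentially. j \<in> A"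
proof -
  have "infinite A"
  proof
    assume "finite A"
    have "\<exists>\<^sub>F N in sequentially. real (card ({1..N} - A)) < 1/2 * real N"
      using assms[unfolded upper_dens_eq_1_iff, rule_format, of "1/2"] by simp
    then have "\<exists>\<^sub>F N in sequentially. real (card ({1..N} - A)) < 1/2 * real N \<and> 2 * card A < N"
      by (rule frequently_eventually_frequently) (rule eventually_gt_at_top)
    then obtain N where N: "real (card ({1..N} - A)) < 1/2 * real N" "2 * card A < N"
      by (auto dest: frequently_ex)
    have "N - card A \<le> card ({1..N} - A)"
      using diff_card_le_card_Diff[OF \<open>finite A\<close>, of "{1..N}"] by simp
    with N show False by linarith
  qed
  then show ?thesis
    unfolding frequently_sequentially infinite_nat_iff_unbounded_le by blast
qed

lemma card_diff_shifts_le: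
  "card ({1..N} - {j. \<forall>m\<le>L. j + m \<in> A}) \<le> Suc L * card ({1..N + L} - A)"
proof -
  have "{1..N} - {j. \<forall>m\<le>L. j + m \<in> A} \<subseteq> (\<Union>m\<le>L. (\<lambda>i. i - m) ` ({1..N + L} - A))"
  proof
    fix j assume "j \<in> {1..N} - {j. \<forall>m\<le>L. j + m \<in> A}"
    then obtain m where "m \<le> L" "j + m \<in> {1..N + L} - A" "j = j + m - m" by auto
    then show "j \<in> (\<Union>m\<le>L. (\<lambda>i. i - m) ` ({1..N + L} - A))" by blast
  qed
  then have "card ({1..N} - {j. \<forall>m\<le>L. j + m \<in> A})
      \<le> card (\<Union>m\<le>L. (\<lambda>i. i - m) ` ({1..N + L} - A))"
    by (intro card_mono) auto
  also have "\<dots> \<le> (\<Sum>m\<le>L. card ((\<lambda>i. i - m) ` ({1..N + L} - A)))"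
    by (rule card_UN_le) simp
  also have "\<dots> \<le> (\<Sum>m\<le>L. card ({1..N + L} - A))"
    by (intro sum_mono card_image_le) simp
  finally show ?thesis by simp
qed

lemma upper_dens_eq_1_shifts:
  assumes "upper_dens A = 1"
  shows "upper_dens {j. \<forall>m\<le>L. j + m \<in> A} = 1"
  unfolding upper_dens_eq_1_iff frequently_sequentially
proof (intro allI impI)
  fix \<eta> :: real and N0 assume "0 < \<eta>"
  then have "\<exists>\<^sub>F N in sequentially. real (card ({1..N} - A)) < \<eta> / (2 * Suc L) * real N"
    using assms[unfolded upper_dens_eq_1_iff, rule_format, of "\<eta> / (2 * Suc L)"] by simp
  then obtain N where N: "N0 + 2 * L \<le> N" "real (card ({1..N} - A)) < \<eta> / (2 * Suc L) * real N"
    unfolding frequently_sequentially by blast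
  have "card ({1..N - L} - {j. \<forall>m\<le>L. j + m \<in> A}) \<le> Suc L * card ({1..N} - A)"
    using card_diff_shifts_le[of "N - L" L A] N(1) by (simp add: le_diff_iff')
  then have "real (card ({1..N - L} - {j. \<forall>m\<le>L. j + m \<in> A}))
      \<le> real (Suc L) * real (card ({1..N} - A))"
    unfolding of_nat_mult[symmetric] of_nat_le_iff .
  also have "\<dots> < \<eta> / 2 * real N"
    using N(2) by (simp add: field_simps)
  also have "\<dots> \<le> \<eta> * real (N - L)"
    using N(1) \<open>0 < \<eta>\<close> by (simp add: of_nat_diff field_simps)
  finally show "\<exists>N'\<ge>N0. real (card ({1..N'} - {j. \<forall>m\<le>L. j + m \<in> A})) < \<eta> * real N'"
    using N(1) by (intro exI[of _ "N - L"]) auto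
qed

section \<open>Scrambled pairs and segments\<close>

lemma distr_chaoticE:
  assumes "distr_chaotic Y d T"
  obtains x y \<epsilon> where "x \<in> Y" "y \<in> Y" "0 < \<epsilon>"
    "upper_dens {j. \<epsilon> \<le> d ((T ^^ j) x) ((T ^^ j) y)} = 1"
    "\<And>\<delta>. 0 < \<delta> \<Longrightarrow> upper_dens {j. d ((T ^^ j) x) ((T ^^ j) y) < \<delta>} = 1"
proof -
  obtain \<Gamma> \<epsilon> where \<Gamma>: "\<Gamma> \<subseteq> Y" "uncountable \<Gamma>" "0 < \<epsilon>"
    and scrambled: "\<forall>\<delta>>0. \<forall>x\<in>\<Gamma>. \<forall>y\<in>\<Gamma>. x \<noteq> y \<longrightarrow>
      lower_dens {j. d ((T ^^ j) x) ((T ^^ j) y) < \<epsilon>} = 0 \<and>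
      upper_dens {j. d ((T ^^ j) x) ((T ^^ j) y) < \<delta>} = 1"
    using assms unfolding distr_chaotic_def by (elim exE conjE) (rule that)
  have "infinite \<Gamma>"
    using \<Gamma>(2) uncountable_infinite by blast
  then obtain x where x: "x \<in> \<Gamma>"
    using infinite_imp_nonempty by blast
  have "infinite (\<Gamma> - {x})"
    using \<open>infinite \<Gamma>\<close> by simp
  then obtain y where y: "y \<in> \<Gamma>" "y \<noteq> x"
    using infinite_imp_nonempty by blast
  note pair = scrambled[rule_format, OF _ x y(1) y(2)[symmetric]]
  have "lower_dens {j. d ((T ^^ j) x) ((T ^^ j) y) < \<epsilon>} = 0"
    using pair[OF \<Gamma>(3)] by blast
  moreover have "- {j. d ((T ^^ j) x) ((T ^^ j) y) < \<epsilon>} = {j. \<epsilon> \<le> d ((T ^^ j) x) ((T ^^ j) y)}"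
    by auto
  moreover have "upper_dens {j. d ((T ^^ j) x) ((T ^^ j) y) < \<delta>} = 1" if "0 < \<delta>" for \<delta>
    using pair[OF that] by blast
  ultimately show thesis
    using that[of x y \<epsilon>] x y \<Gamma>(1,3) lower_dens_eq_0_iff by auto
qed

lemma dens_scaled_large_small:
  fixes r :: "nat \<Rightarrow> real"
  assumes "0 < t" "t \<le> 1"
    and large: "\<And>R. upper_dens {j. R < r j} = 1"
    and small: "\<And>\<delta>. 0 < \<delta> \<Longrightarrow> upper_dens {j. r j < \<delta>} = 1"
  shows "lower_dens {j. t * r j < 1} = 0"
    and "0 < \<delta> \<Longrightarrow> upper_dens {j. t * r j < \<delta>} = 1"
proof -
  have "{j. 1 / t < r j} \<subseteq> - {j. t * r j < 1}"
    using \<open>0 < t\<close> by (auto simp: pos_divide_less_eq mult.commute)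
  then show "lower_dens {j. t * r j < 1} = 0"
    unfolding lower_dens_eq_0_iff using large by (rule upper_dens_eq_1_mono[rotated])
  assume "0 < \<delta>"
  have "t * r j < \<delta>" if "r j < \<delta>" for j
    using \<open>0 < t\<close> \<open>t \<le> 1\<close> \<open>0 < \<delta>\<close> that mult_left_le_one_le[of "r j" t] mult_nonneg_nonpos[of t "r j"]
    by (cases "0 \<le> r j") auto
  then have "{j. r j < \<delta>} \<subseteq> {j. t * r j < \<delta>}"
    by auto
  then show "upper_dens {j. t * r j < \<delta>} = 1"
    using small[OF \<open>0 < \<delta>\<close>] by (rule upper_dens_eq_1_mono[rotated])
qed

lemma distr_chaotic_segmentI:
  fixes x :: "real \<Rightarrow> 'b" and r :: "nat \<Rightarrow> real"
  assumes "x ` {0..1} \<subseteq> Y"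
    and dist: "\<And>l m j. l \<in> {0..1} \<Longrightarrow> m \<in> {0..1} \<Longrightarrow>
      d ((T ^^ j) (x l)) ((T ^^ j) (x m)) = \<bar>l - m\<bar> * r j"
    and large: "\<And>R. upper_dens {j. R < r j} = 1"
    and small: "\<And>\<delta>. 0 < \<delta> \<Longrightarrow> upper_dens {j. r j < \<delta>} = 1"
  shows "distr_chaotic Y d T"
proof -
  obtain j0 where "0 < r j0"
    using frequently_ex[OF upper_dens_eq_1_frequently[OF large[of 0]]] by auto
  have "inj_on x {0..1}"
  proof (rule inj_onI)
    fix l m assume lm: "l \<in> {0..1}" "m \<in> {0..1}" "x l = x m"
    have "\<bar>l - m\<bar> * r j0 = d ((T ^^ j0) (x l)) ((T ^^ j0) (x m))"
      using dist[OF lm(1,2)] by simp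
    also have "\<dots> = \<bar>l - l\<bar> * r j0"
      unfolding \<open>x l = x m\<close>[symmetric] using dist[OF lm(1,1)] by simp
    finally show "l = m"
      using \<open>0 < r j0\<close> by simp
  qed
  then have "uncountable (x ` {0..1})"
    using uncountable_closed_interval[of 0 "1::real"] by (simp add: countable_image_inj_eq)
  have "lower_dens {j. d ((T ^^ j) (x l)) ((T ^^ j) (x m)) < 1} = 0 \<and>
      upper_dens {j. d ((T ^^ j) (x l)) ((T ^^ j) (x m)) < \<delta>} = 1"
    if "l \<in> {0..1}" "m \<in> {0..1}" "l \<noteq> m" "0 < \<delta>" for l m \<delta>
    using dens_scaled_large_small[of "\<bar>l - m\<bar>" r, OF _ _ large small] dist[OF that(1,2)] that
    by (auto simp: abs_le_iff)
  then have "\<forall>\<delta>>0. \<forall>a\<in>x ` {0..1}. \<forall>b\<in>x ` {0..1}. a \<noteq> b \<longrightarrow>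
      lower_dens {j. d ((T ^^ j) a) ((T ^^ j) b) < 1} = 0 \<and>
      upper_dens {j. d ((T ^^ j) a) ((T ^^ j) b) < \<delta>} = 1"
    by fastforce
  with assms(1) \<open>uncountable (x ` {0..1})\<close> show ?thesis
    unfolding distr_chaotic_def by (intro exI[of _ "x ` {0..1}"] conjI exI[of _ "1::real"]) simp_all
qed

section \<open>Weighted sums of shifted sequences\<close>

lemma interleaved_frequently_choice:
  assumes P: "\<And>k L. \<exists>\<^sub>F n in sequentially. P k L n"
    and Q: "\<And>k n. \<exists>\<^sub>F L in sequentially. Q k n L"
  obtains L n :: "nat \<Rightarrow> nat" where "strict_mono L" "strict_mono n"
    "\<And>k. P k (L k) (n k)" "\<And>k. Q k (n k) (L (Suc k))"
proof -
  have "\<exists>f. \<forall>k. P k (fst (f k)) (snd (f k)) \<and>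
      fst (f k) < fst (f (Suc k)) \<and> snd (f k) < snd (f (Suc k)) \<and> Q k (snd (f k)) (fst (f (Suc k)))"
  proof (rule dependent_nat_choice)
    show "\<exists>x. P 0 (fst x) (snd x)"
      using frequently_ex[OF P[of 0 0]] by auto
  next
    fix x k assume "P k (fst x) (snd x)"
    obtain L' where L': "fst x < L'" "Q k (snd x) L'"
      using Q[of k "snd x", unfolded frequently_sequentially, rule_format, of "Suc (fst x)"]
      by (auto simp: Suc_le_eq)
    obtain n' where n': "snd x < n'" "P (Suc k) L' n'"
      using P[of "Suc k" L', unfolded frequently_sequentially, rule_format, of "Suc (snd x)"]
      by (auto simp: Suc_le_eq)
    show "\<exists>y. P (Suc k) (fst y) (snd y) \<and>
        fst x < fst y \<and> snd x < snd y \<and> Q k (snd x) (fst y)"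
      using L' n' by (intro exI[of _ "(L', n')"]) simp
  qed
  then obtain f where f: "\<And>k. P k (fst (f k)) (snd (f k))"
    "\<And>k. fst (f k) < fst (f (Suc k))" "\<And>k. snd (f k) < snd (f (Suc k))"
    "\<And>k. Q k (snd (f k)) (fst (f (Suc k)))"
    by blast
  show thesis
    by (rule that[of "fst \<circ> f" "snd \<circ> f"]) (simp_all add: strict_mono_Suc_iff f)
qed

lemma upper_dens_scaled_small:
  fixes s :: "nat \<Rightarrow> ennreal"
  assumes small: "\<And>\<delta>. 0 < \<delta> \<Longrightarrow> upper_dens {j. s j < ennreal \<delta>} = 1"
    and "0 < a" "0 < \<delta>"
  shows "upper_dens {j. ennreal a * s j < ennreal \<delta>} = 1"
proof (rule upper_dens_eq_1_mono[OF small])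
  show "0 < \<delta> / a"
    using assms(2,3) by simp
  show "{j. s j < ennreal (\<delta> / a)} \<subseteq> {j. ennreal a * s j < ennreal \<delta>}"
  proof safe
    fix j assume "s j < ennreal (\<delta> / a)"
    then have "ennreal a * s j < ennreal a * ennreal (\<delta> / a)"
      using assms(2) by (intro ennreal_mult_strict_left_mono) simp_all
    also have "\<dots> = ennreal \<delta>"
      using assms(2,3) by (simp flip: ennreal_mult)
    finally show "ennreal a * s j < ennreal \<delta>" .
  qed
qed

lemma frequently_small_window:
  fixes s :: "nat \<Rightarrow> ennreal"
  assumes "1 \<le> C" and growth: "\<And>j n. s (j + n) \<le> ennreal C ^ j * s n"
    and small: "\<And>\<delta>. 0 < \<delta> \<Longrightarrow> upper_dens {j. s j < ennreal \<delta>} = 1" and "0 < \<epsilon>"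
  shows "\<exists>\<^sub>F n in sequentially. \<forall>j\<le>L. s (j + n) < ennreal \<epsilon>"
proof -
  have "C \<noteq> 0" and CL: "0 < C ^ L"
    using \<open>1 \<le> C\<close> by simp_all
  have "\<exists>\<^sub>F n in sequentially. s n < ennreal (\<epsilon> / C ^ L)"
    using upper_dens_eq_1_frequently[OF small] CL \<open>C \<noteq> 0\<close> \<open>0 < \<epsilon>\<close> by simp
  then show ?thesis
  proof (rule frequently_elim1, intro allI impI)
    fix n j assume n: "s n < ennreal (\<epsilon> / C ^ L)" and "j \<le> L"
    have "ennreal C ^ j \<le> ennreal C ^ L"
      using \<open>1 \<le> C\<close> \<open>j \<le> L\<close> by (intro power_increasing) simp_all
    then have "s (j + n) \<le> ennreal (C ^ L) * s n"
      using growth[of j n] \<open>1 \<le> C\<close> by (simp add: ennreal_power mult_right_mono order_trans)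
    also have "\<dots> < ennreal (C ^ L) * ennreal (\<epsilon> / C ^ L)"
      using n CL by (intro ennreal_mult_strict_left_mono) simp_all
    also have "\<dots> = ennreal \<epsilon>"
      using CL \<open>C \<noteq> 0\<close> \<open>0 < \<epsilon>\<close> by (simp flip: ennreal_mult)
    finally show "s (j + n) < ennreal \<epsilon>" .
  qed
qed

lemma suminf_le_geometric_ennreal:
  fixes f :: "nat \<Rightarrow> ennreal"
  assumes "\<And>i. f i \<le> ennreal (a * (1/2) ^ i)" and "0 \<le> a"
  shows "(\<Sum>i. f i) \<le> ennreal (2 * a)"
proof -
  have "(\<Sum>i. f i) \<le> (\<Sum>i. ennreal (a * (1/2) ^ i))"
    using assms(1) by (intro suminf_le summableI)
  also have "\<dots> = ennreal (\<Sum>i. a * (1/2) ^ i)"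
    using assms(2) by (intro suminf_ennreal2) (simp_all add: summable_geometric)
  also have "(\<Sum>i. a * (1/2::real) ^ i) = 2 * a"
    by (simp add: suminf_mult summable_geometric suminf_geometric)
  finally show ?thesis .
qed

lemma upper_dens_suminf_large:
  fixes s w :: "nat \<Rightarrow> ennreal"
  assumes "upper_dens {j. ennreal e \<le> s j} = 1" and "ennreal R < w k * ennreal e"
  shows "upper_dens {j. ennreal R < (\<Sum>i. w i * s (j + n i))} = 1"
proof (rule upper_dens_eq_1_mono[OF upper_dens_eq_1_shifts[OF assms(1), of "n k"]], safe)
  fix j assume "\<forall>m\<le>n k. j + m \<in> {j. ennreal e \<le> s j}"
  then have "w k * ennreal e \<le> w k * s (j + n k)"
    by (intro mult_left_mono) simp_all
  also have "\<dots> \<le> (\<Sum>i. w i * s (j + n i))"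
    using sum_le_suminf[OF summableI, of "{k}" "\<lambda>i. w i * s (j + n i)"] by simp
  finally show "ennreal R < (\<Sum>i. w i * s (j + n i))"
    using assms(2) by simp
qed

lemma quarter_power_max_le: "(1/4::real) ^ max i k \<le> (1/2) ^ k * (1/2) ^ i"
proof -
  have "(1/4::real) ^ max i k = (1/2) ^ max i k * (1/2) ^ max i k"
    by (simp flip: power_mult_distrib)
  also have "\<dots> \<le> (1/2) ^ k * (1/2) ^ i"
    by (intro mult_mono power_decreasing) simp_all
  finally show ?thesis .
qed

lemma suminf_shifts_le_geometric:
  fixes s w :: "nat \<Rightarrow> ennreal" and L n :: "nat \<Rightarrow> nat"
  assumes "mono w" "mono L" "mono n"
    and window: "\<And>k j. j \<le> L k \<Longrightarrow> w k * s (j + n k) < ennreal ((1/4) ^ k)"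
    and "j \<le> L (Suc k)" and good: "\<forall>m\<le>n k. w k * s (j + m) < ennreal ((1/4) ^ k)"
  shows "(\<Sum>i. w i * s (j + n i)) \<le> ennreal (2 * (1/2) ^ k)"
proof (rule suminf_le_geometric_ennreal)
  fix i
  \<comment> \<open>Terms with i \<le> k are small because j is good at level k, the others because j lies in
    the window of n i.\<close>
  have "w i * s (j + n i) < ennreal ((1/4) ^ max i k)"
  proof (cases "i \<le> k")
    case True
    then have "w i * s (j + n i) \<le> w k * s (j + n i)"
      using \<open>mono w\<close> by (intro mult_right_mono) (simp_all add: monoD)
    also have "\<dots> < ennreal ((1/4) ^ k)"
      using good \<open>mono n\<close> True by (simp add: monoD)
    finally show ?thesis
      using True by (simp add: max_def)
  next
    case False
    then have "j \<le> L i"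
      using \<open>j \<le> L (Suc k)\<close> \<open>mono L\<close> by (meson le_trans monoD not_less_eq_eq)
    then show ?thesis
      using window False by (simp add: max_def)
  qed
  also have "\<dots> \<le> ennreal ((1/2) ^ k * (1/2) ^ i)"
    by (intro ennreal_leI quarter_power_max_le)
  finally show "w i * s (j + n i) \<le> ennreal ((1/2) ^ k * (1/2) ^ i)"
    by simp
qed simp

lemma upper_dens_suminf_small:
  fixes s w :: "nat \<Rightarrow> ennreal" and L n :: "nat \<Rightarrow> nat"
  assumes "mono w" "strict_mono L" "mono n"
    and window: "\<And>k j. j \<le> L k \<Longrightarrow> w k * s (j + n k) < ennreal ((1/4) ^ k)"
    and dense: "\<And>k. real (card ({1..L (Suc k)} - {j. \<forall>m\<le>n k. w k * s (j + m) < ennreal ((1/4) ^ k)}))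
      < real (L (Suc k)) / real (Suc k)"
    and "0 < \<delta>"
  shows "upper_dens {j. (\<Sum>i. w i * s (j + n i)) < ennreal \<delta>} = 1"
  unfolding upper_dens_eq_1_iff frequently_sequentially
proof (intro allI impI)
  fix \<eta> :: real and N0 assume "0 < \<eta>"
  have "\<forall>\<^sub>F k in sequentially. 2 * (1/2) ^ k < \<delta>"
    by (rule order_tendstoD(2)[OF _ \<open>0 < \<delta>\<close>]) (intro tendsto_mult_right_zero LIMSEQ_power_zero; simp)
  moreover have "\<forall>\<^sub>F k in sequentially. 1 / real (Suc k) < \<eta>"
    using order_tendstoD(2)[OF LIMSEQ_inverse_real_of_nat \<open>0 < \<eta>\<close>] by (simp add: inverse_eq_divide)
  ultimately have "\<forall>\<^sub>F k in sequentially. 2 * (1/2) ^ k < \<delta> \<and> 1 / real (Suc k) < \<eta>"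
    by (rule eventually_conj)
  then obtain k0 where k0: "\<And>k. k0 \<le> k \<Longrightarrow> 2 * (1/2) ^ k < \<delta> \<and> 1 / real (Suc k) < \<eta>"
    unfolding eventually_sequentially by blast
  define k where "k = max k0 N0"
  define N where "N = L (Suc k)"
  let ?W = "{j. \<forall>m\<le>n k. w k * s (j + m) < ennreal ((1/4) ^ k)}"
  let ?T = "{j. (\<Sum>i. w i * s (j + n i)) < ennreal \<delta>}"
  have "{1..N} \<inter> ?W \<subseteq> ?T"
  proof
    fix j assume "j \<in> {1..N} \<inter> ?W"
    then have "(\<Sum>i. w i * s (j + n i)) \<le> ennreal (2 * (1/2) ^ k)"
      unfolding N_def
      by (intro suminf_shifts_le_geometric[OF \<open>mono w\<close> strict_mono_mono[OF \<open>strict_mono L\<close>] \<open>mono n\<close> window])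
        simp_all
    also have "\<dots> < ennreal \<delta>"
      using k0[of k] \<open>0 < \<delta>\<close> by (simp add: k_def ennreal_lessI)
    finally show "j \<in> ?T" by simp
  qed
  then have "real (card ({1..N} - ?T)) \<le> real (card ({1..N} - ?W))"
    by (intro of_nat_mono card_mono) auto
  also have "\<dots> < real N / real (Suc k)"
    using dense[of k] unfolding N_def by simp
  also have "\<dots> \<le> \<eta> * real N"
  proof -
    have "1 / real (Suc k) \<le> \<eta>"
      using k0[of k] by (simp add: k_def)
    from mult_right_mono[OF this, of "real N"] show ?thesis
      by simp
  qed
  finally have "real (card ({1..N} - ?T)) < \<eta> * real N" .
  moreover have "N0 \<le> N"
    using seq_suble[OF \<open>strict_mono L\<close>, of "Suc k"] unfolding N_def k_def by simp
  ultimately show "\<exists>N\<ge>N0. real (card ({1..N} - ?T)) < \<eta> * real N"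
    by (intro exI[of _ N] conjI)
qed

lemma shift_windowsE:
  fixes s :: "nat \<Rightarrow> ennreal" and a :: "nat \<Rightarrow> real"
  assumes "1 \<le> C" and growth: "\<And>j n. s (j + n) \<le> ennreal C ^ j * s n"
    and small: "\<And>\<delta>. 0 < \<delta> \<Longrightarrow> upper_dens {j. s j < ennreal \<delta>} = 1" and "\<And>k. 0 < a k"
  obtains L n :: "nat \<Rightarrow> nat" where "strict_mono L" "strict_mono n"
    "\<And>k j. j \<le> L k \<Longrightarrow> ennreal (a k) * s (j + n k) < ennreal ((1/4) ^ k)"
    "\<And>k. real (card ({1..L (Suc k)} - {j. \<forall>m\<le>n k. ennreal (a k) * s (j + m) < ennreal ((1/4) ^ k)}))
      < real (L (Suc k)) / real (Suc k)"
proof -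
  have scaled_small: "upper_dens {j. ennreal (a k) * s j < ennreal \<delta>} = 1" if "0 < \<delta>" for k \<delta>
    using upper_dens_scaled_small[OF small \<open>0 < a k\<close> that] .
  have "\<exists>\<^sub>F n in sequentially. \<forall>j\<le>L. ennreal (a k) * s (j + n) < ennreal ((1/4) ^ k)" for k L
  proof (rule frequently_small_window[OF \<open>1 \<le> C\<close>])
    fix j n
    have "ennreal (a k) * s (j + n) \<le> ennreal (a k) * (ennreal C ^ j * s n)"
      by (rule mult_left_mono[OF growth]) simp
    then show "ennreal (a k) * s (j + n) \<le> ennreal C ^ j * (ennreal (a k) * s n)"
      by (simp add: ac_simps)
  qed (simp_all add: scaled_small)
  moreover have "\<exists>\<^sub>F L in sequentially. real (card ({1..L} -
      {j. \<forall>m\<le>n. ennreal (a k) * s (j + m) < ennreal ((1/4) ^ k)})) < real L / real (Suc k)"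
    for k n
  proof -
    have "upper_dens {j. \<forall>m\<le>n. j + m \<in> {j. ennreal (a k) * s j < ennreal ((1/4) ^ k)}} = 1"
      by (intro upper_dens_eq_1_shifts scaled_small) simp
    from this[unfolded upper_dens_eq_1_iff, rule_format, of "1 / real (Suc k)"] show ?thesis
      by simp
  qed
  \<comment> \<open>n k keeps the k-th term below 4^-k at all times up to L k; L (Suc k) is a time up to
    which most times keep the terms 0..k below 4^-k.\<close>
  ultimately obtain L n where "strict_mono L" "strict_mono n"
    and window: "\<And>k. \<forall>j\<le>L k. ennreal (a k) * s (j + n k) < ennreal ((1/4) ^ k)"
    and dense: "\<And>k. real (card ({1..L (Suc k)} -
      {j. \<forall>m\<le>n k. ennreal (a k) * s (j + m) < ennreal ((1/4) ^ k)})) < real (L (Suc k)) / real (Suc k)"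
    by (rule interleaved_frequently_choice[where
          P = "\<lambda>k L n. \<forall>j\<le>L. ennreal (a k) * s (j + n) < ennreal ((1/4) ^ k)" and
          Q = "\<lambda>k n L. real (card ({1..L} - {j. \<forall>m\<le>n. ennreal (a k) * s (j + m) < ennreal ((1/4) ^ k)}))
            < real L / real (Suc k)"])
      (rule that)
  with that show thesis
    by blast
qed

lemma unbounded_shift_sumE:
  fixes s :: "nat \<Rightarrow> ennreal"
  assumes "1 \<le> C" and growth: "\<And>j n. s (j + n) \<le> ennreal C ^ j * s n"
    and "0 < e" and large: "upper_dens {j. ennreal e \<le> s j} = 1"
    and small: "\<And>\<delta>. 0 < \<delta> \<Longrightarrow> upper_dens {j. s j < ennreal \<delta>} = 1"
  obtains w :: "nat \<Rightarrow> ennreal" and n :: "nat \<Rightarrow> nat" where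
    "(\<Sum>i. w i * s (n i)) < \<infinity>"
    "\<And>R. upper_dens {j. ennreal R < (\<Sum>i. w i * s (j + n i))} = 1"
    "\<And>\<delta>. 0 < \<delta> \<Longrightarrow> upper_dens {j. (\<Sum>i. w i * s (j + n i)) < ennreal \<delta>} = 1"
proof -
  define w where "w k = ennreal (real (Suc k) / e)" for k
  have "mono w"
    unfolding w_def using \<open>0 < e\<close> by (intro monoI ennreal_leI divide_right_mono) simp_all
  obtain L n where "strict_mono L" "strict_mono n"
    and window: "\<And>k j. j \<le> L k \<Longrightarrow> w k * s (j + n k) < ennreal ((1/4) ^ k)"
    and dense: "\<And>k. real (card ({1..L (Suc k)} - {j. \<forall>m\<le>n k. w k * s (j + m) < ennreal ((1/4) ^ k)}))
      < real (L (Suc k)) / real (Suc k)"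
    using shift_windowsE[OF \<open>1 \<le> C\<close> growth small, of "\<lambda>k. real (Suc k) / e"] \<open>0 < e\<close>
    unfolding w_def[symmetric] by auto
  show thesis
  proof (rule that[of w n])
    have "w i * s (n i) \<le> ennreal (1 * (1/2) ^ i)" for i
    proof -
      have "w i * s (0 + n i) < ennreal ((1/4) ^ i)"
        by (rule window) simp
      also have "\<dots> \<le> ennreal (1 * (1/2) ^ i)"
        by (intro ennreal_leI) (simp add: power_mono)
      finally show ?thesis by simp
    qed
    then have "(\<Sum>i. w i * s (n i)) \<le> ennreal (2 * 1)"
      by (rule suminf_le_geometric_ennreal) simp
    then show "(\<Sum>i. w i * s (n i)) < \<infinity>"
      by (rule le_less_trans) simp
  next
    fix R :: real
    obtain k where "R < real k"
      using reals_Archimedean2 by blast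
    then have "ennreal R < ennreal (real (Suc k))"
      by (intro ennreal_lessI) simp_all
    also have "\<dots> = w k * ennreal e"
      using \<open>0 < e\<close> by (simp add: w_def flip: ennreal_mult)
    finally show "upper_dens {j. ennreal R < (\<Sum>i. w i * s (j + n i))} = 1"
      by (rule upper_dens_suminf_large[OF large])
  next
    fix \<delta> :: real assume "0 < \<delta>"
    show "upper_dens {j. (\<Sum>i. w i * s (j + n i)) < ennreal \<delta>} = 1"
      using upper_dens_suminf_small[OF \<open>mono w\<close> \<open>strict_mono L\<close> strict_mono_mono[OF \<open>strict_mono n\<close>]
          window dense \<open>0 < \<delta>\<close>] .
  qed
qed

section \<open>Orbit integrals\<close>

definition orbit_integral :: "'a measure \<Rightarrow> ('a \<Rightarrow> 'a) \<Rightarrow> ('a \<Rightarrow> ennreal) \<Rightarrow> nat \<Rightarrow> ennreal" where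
  "orbit_integral M \<phi> u j = (\<integral>\<^sup>+x. u ((\<phi> ^^ j) x) \<partial>M)"

lemma nn_integral_comp_le:
  assumes \<phi>: "\<phi> \<in> measurable M M" and "0 \<le> c"
    and preimage: "\<forall>B\<in>sets M. emeasure M (\<phi> -` B \<inter> space M) \<le> ennreal c * emeasure M B"
    and u: "u \<in> borel_measurable M"
  shows "(\<integral>\<^sup>+x. u (\<phi> x) \<partial>M) \<le> ennreal c * (\<integral>\<^sup>+x. u x \<partial>M)"
proof -
  have "distr M M \<phi> \<le> density M (\<lambda>_. ennreal c)"
    unfolding le_measure_iff
  proof (simp, intro le_funI)
    fix B
    show "emeasure (distr M M \<phi>) B \<le> emeasure (density M (\<lambda>_. ennreal c)) B"
      using preimage
      by (cases "B \<in> sets M")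
        (simp_all add: emeasure_distr \<phi> emeasure_density nn_integral_cmult_indicator emeasure_notin_sets)
  qed
  then have "(\<integral>\<^sup>+x. u x \<partial>distr M M \<phi>) \<le> (\<integral>\<^sup>+x. u x \<partial>density M (\<lambda>_. ennreal c))"
    by (intro nn_integral_mono_measure) simp_all
  then show ?thesis
    by (simp add: nn_integral_distr nn_integral_density nn_integral_cmult \<phi> u)
qed

lemma orbit_integral_add_le:
  assumes \<phi>: "\<phi> \<in> measurable M M" and c: "0 \<le> c"
    and preimage: "\<forall>B\<in>sets M. emeasure M (\<phi> -` B \<inter> space M) \<le> ennreal c * emeasure M B"
    and u: "u \<in> borel_measurable M"
  shows "orbit_integral M \<phi> u (j + n) \<le> ennreal c ^ j * orbit_integral M \<phi> u n"
proof (induction j)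
  case 0
  then show ?case by simp
next
  case (Suc j)
  have "(\<lambda>x. u ((\<phi> ^^ (j + n)) x)) \<in> borel_measurable M"
    using u \<phi> by measurable
  then have "orbit_integral M \<phi> u (Suc j + n) \<le> ennreal c * orbit_integral M \<phi> u (j + n)"
    unfolding orbit_integral_def funpow_Suc_right add_Suc comp_apply
    by (rule nn_integral_comp_le[OF \<phi> c preimage])
  also have "\<dots> \<le> ennreal c * (ennreal c ^ j * orbit_integral M \<phi> u n)"
    using Suc.IH by (rule mult_left_mono) simp
  finally show ?case by (simp add: mult.assoc)
qed

lemma orbit_integral_finite:
  assumes \<phi>: "\<phi> \<in> measurable M M" and c: "0 \<le> c"
    and preimage: "\<forall>B\<in>sets M. emeasure M (\<phi> -` B \<inter> space M) \<le> ennreal c * emeasure M B"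
    and u: "u \<in> borel_measurable M" and "orbit_integral M \<phi> u 0 < \<infinity>"
  shows "orbit_integral M \<phi> u j < \<infinity>"
proof -
  have "orbit_integral M \<phi> u j \<le> ennreal (c ^ j) * orbit_integral M \<phi> u 0"
    using orbit_integral_add_le[OF assms(1-4), of j 0] c by (simp add: ennreal_power)
  also have "\<dots> < \<infinity>"
    using assms(5) by (simp add: ennreal_mult_less_top)
  finally show ?thesis .
qed

lemma orbit_integral_suminf:
  assumes \<phi>: "\<phi> \<in> measurable M M" and u: "u \<in> borel_measurable M"
  shows "orbit_integral M \<phi> (\<lambda>x. \<Sum>i. w i * u ((\<phi> ^^ n i) x)) j
    = (\<Sum>i. w i * orbit_integral M \<phi> u (j + n i))"
proof -
  have "orbit_integral M \<phi> (\<lambda>x. \<Sum>i. w i * u ((\<phi> ^^ n i) x)) j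
      = (\<integral>\<^sup>+x. (\<Sum>i. w i * u ((\<phi> ^^ (n i + j)) x)) \<partial>M)"
    unfolding orbit_integral_def by (simp add: funpow_add)
  also have "\<dots> = (\<Sum>i. (\<integral>\<^sup>+x. w i * u ((\<phi> ^^ (n i + j)) x) \<partial>M))"
    by (rule nn_integral_suminf) (use \<phi> u in measurable)
  also have "\<dots> = (\<Sum>i. w i * orbit_integral M \<phi> u (j + n i))"
    unfolding orbit_integral_def
    by (subst nn_integral_cmult) (use \<phi> u in \<open>measurable\<close>, simp add: add.commute)
  finally show ?thesis .
qed


section \<open>Composition operators on L^p\<close>

lemma comp_op_funpow: "(comp_op \<phi> ^^ j) f = f \<circ> (\<phi> ^^ j)"
proof (induction j)
  case (Suc j)
  have "(comp_op \<phi> ^^ Suc j) f = comp_op \<phi> ((comp_op \<phi> ^^ j) f)"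
    by simp
  also have "\<dots> = (f \<circ> (\<phi> ^^ j)) \<circ> \<phi>"
    by (simp only: Suc.IH comp_op_def)
  finally show ?case
    by (simp add: funpow_Suc_right comp_assoc del: funpow.simps)
qed simp

lemma lp_norm_comp_op_funpow_diff:
  "lp_norm M p (\<lambda>x. (comp_op \<phi> ^^ j) f x - (comp_op \<phi> ^^ j) g x)
    = enn2real (orbit_integral M \<phi> (\<lambda>x. ennreal (\<bar>f x - g x\<bar> powr p)) j) powr (1 / p)"
  by (simp add: lp_norm_def orbit_integral_def comp_op_funpow)

lemma abs_diff_powr_le:
  fixes a b p :: real
  assumes "0 \<le> p"
  shows "\<bar>a - b\<bar> powr p \<le> 2 powr p * (\<bar>a\<bar> powr p + \<bar>b\<bar> powr p)"
proof -
  have "\<bar>a - b\<bar> powr p \<le> (2 * max \<bar>a\<bar> \<bar>b\<bar>) powr p"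
    using assms by (intro powr_mono2) auto
  also have "\<dots> = 2 powr p * max \<bar>a\<bar> \<bar>b\<bar> powr p"
    by (simp add: powr_mult)
  also have "\<dots> \<le> 2 powr p * (\<bar>a\<bar> powr p + \<bar>b\<bar> powr p)"
    by (intro mult_left_mono) (auto simp: max_def)
  finally show ?thesis .
qed

lemma lp_space_diff_integral_finite:
  assumes "f \<in> lp_space M p" "g \<in> lp_space M p" "0 \<le> p"
  shows "(\<integral>\<^sup>+x. ennreal (\<bar>f x - g x\<bar> powr p) \<partial>M) < \<infinity>"
proof -
  have [measurable]: "f \<in> borel_measurable M" "g \<in> borel_measurable M"
    using assms(1,2) unfolding lp_space_def by blast+
  have "(\<integral>\<^sup>+x. ennreal (\<bar>f x - g x\<bar> powr p) \<partial>M)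
      \<le> (\<integral>\<^sup>+x. ennreal (2 powr p) * (ennreal (\<bar>f x\<bar> powr p) + ennreal (\<bar>g x\<bar> powr p)) \<partial>M)"
  proof (rule nn_integral_mono)
    fix x
    have "ennreal (\<bar>f x - g x\<bar> powr p) \<le> ennreal (2 powr p * (\<bar>f x\<bar> powr p + \<bar>g x\<bar> powr p))"
      using assms(3) by (intro ennreal_leI abs_diff_powr_le)
    also have "\<dots> = ennreal (2 powr p) * (ennreal (\<bar>f x\<bar> powr p) + ennreal (\<bar>g x\<bar> powr p))"
      by (simp add: ennreal_mult ennreal_plus)
    finally show "ennreal (\<bar>f x - g x\<bar> powr p)
        \<le> ennreal (2 powr p) * (ennreal (\<bar>f x\<bar> powr p) + ennreal (\<bar>g x\<bar> powr p))" .
  qed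
  also have "\<dots> = ennreal (2 powr p)
      * ((\<integral>\<^sup>+x. ennreal (\<bar>f x\<bar> powr p) \<partial>M) + (\<integral>\<^sup>+x. ennreal (\<bar>g x\<bar> powr p) \<partial>M))"
    by (simp add: nn_integral_cmult nn_integral_add)
  also have "\<dots> < \<infinity>"
    using assms(1,2) unfolding lp_space_def by (simp add: ennreal_mult_less_top)
  finally show ?thesis .
qed

lemma enn2real_powr_less_iff:
  assumes "x < \<infinity>" "0 < \<delta>" "0 < p"
  shows "enn2real x powr (1 / p) < \<delta> \<longleftrightarrow> x < ennreal (\<delta> powr p)"
proof -
  have "enn2real x powr (1 / p) < \<delta> \<longleftrightarrow> enn2real x < \<delta> powr p"
    using assms(2,3) powr_less_mono2[of p "enn2real x powr (1 / p)" \<delta>]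
      powr_less_mono2[of "1 / p" "enn2real x" "\<delta> powr p"]
    by (auto simp: powr_powr)
  also have "\<dots> \<longleftrightarrow> x < ennreal (\<delta> powr p)"
    using assms(1) by (cases x) (simp_all add: ennreal_less_iff)
  finally show ?thesis .
qed

lemma comp_op_distr_chaotic_LpE:
  assumes \<phi>: "\<phi> \<in> measurable M M" and c: "0 \<le> c"
    and preimage: "\<forall>B\<in>sets M. emeasure M (\<phi> -` B \<inter> space M) \<le> ennreal c * emeasure M B"
    and "0 < p" and "comp_op_distr_chaotic_Lp M p \<phi>"
  obtains u e where "u \<in> borel_measurable M" "orbit_integral M \<phi> u 0 < \<infinity>" "0 < e"
    "upper_dens {j. ennreal e \<le> orbit_integral M \<phi> u j} = 1"
    "\<And>\<delta>. 0 < \<delta> \<Longrightarrow> upper_dens {j. orbit_integral M \<phi> u j < ennreal \<delta>} = 1"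
proof -
  obtain f g \<epsilon> where fg: "f \<in> lp_space M p" "g \<in> lp_space M p" and "0 < \<epsilon>"
    and large: "upper_dens {j. \<epsilon> \<le> lp_norm M p (\<lambda>x. (comp_op \<phi> ^^ j) f x - (comp_op \<phi> ^^ j) g x)} = 1"
    and small: "\<And>\<delta>. 0 < \<delta> \<Longrightarrow>
      upper_dens {j. lp_norm M p (\<lambda>x. (comp_op \<phi> ^^ j) f x - (comp_op \<phi> ^^ j) g x) < \<delta>} = 1"
    using distr_chaoticE[OF assms(5)[unfolded comp_op_distr_chaotic_Lp_def]] by blast
  define u where "u x = ennreal (\<bar>f x - g x\<bar> powr p)" for x
  have [measurable]: "f \<in> borel_measurable M" "g \<in> borel_measurable M"
    using fg unfolding lp_space_def by blast+
  have u: "u \<in> borel_measurable M"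
    unfolding u_def by measurable
  have u0: "orbit_integral M \<phi> u 0 < \<infinity>"
    using lp_space_diff_integral_finite[OF fg] \<open>0 < p\<close> by (simp add: orbit_integral_def u_def)
  have less_iff: "lp_norm M p (\<lambda>x. (comp_op \<phi> ^^ j) f x - (comp_op \<phi> ^^ j) g x) < \<delta>
      \<longleftrightarrow> orbit_integral M \<phi> u j < ennreal (\<delta> powr p)" if "0 < \<delta>" for j \<delta>
    unfolding lp_norm_comp_op_funpow_diff u_def[symmetric]
    using orbit_integral_finite[OF \<phi> c preimage u u0] that \<open>0 < p\<close> by (rule enn2real_powr_less_iff)
  show thesis
  proof (rule that[OF u u0])
    show "0 < \<epsilon> powr p"
      using \<open>0 < \<epsilon>\<close> by simp
    show "upper_dens {j. ennreal (\<epsilon> powr p) \<le> orbit_integral M \<phi> u j} = 1"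
      using large less_iff[OF \<open>0 < \<epsilon>\<close>] by (simp add: not_less[symmetric])
    fix \<delta> :: real assume "0 < \<delta>"
    then have "(\<delta> powr (1 / p)) powr p = \<delta>"
      using \<open>0 < p\<close> by (simp add: powr_powr)
    then show "upper_dens {j. orbit_integral M \<phi> u j < ennreal \<delta>} = 1"
      using small[of "\<delta> powr (1 / p)"] less_iff[of "\<delta> powr (1 / p)"] \<open>0 < \<delta>\<close> by simp
  qed
qed

lemma orbit_integral_enn2real:
  assumes \<phi>: "\<phi> \<in> measurable M M" and v: "v \<in> borel_measurable M"
    and "orbit_integral M \<phi> v j < \<infinity>"
  shows "orbit_integral M \<phi> (\<lambda>x. ennreal (enn2real (v x))) j = orbit_integral M \<phi> v j"
proof -
  have "(\<lambda>x. v ((\<phi> ^^ j) x)) \<in> borel_measurable M"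
    using \<phi> v by measurable
  then have "AE x in M. v ((\<phi> ^^ j) x) \<noteq> \<infinity>"
    by (rule nn_integral_PInf_AE) (use assms(3) in \<open>simp add: orbit_integral_def\<close>)
  then show ?thesis
    unfolding orbit_integral_def by (intro nn_integral_cong_AE) (auto simp: less_top)
qed

lemma orbit_integral_root_diff:
  assumes \<phi>: "\<phi> \<in> measurable M M" and v: "v \<in> borel_measurable M"
    and "orbit_integral M \<phi> v j < \<infinity>" and "0 < q"
  defines "F \<equiv> \<lambda>x. enn2real (v x) powr (1 / q)"
  shows "orbit_integral M \<phi> (\<lambda>x. ennreal (\<bar>l * F x - m * F x\<bar> powr q)) j
    = ennreal (\<bar>l - m\<bar> powr q) * orbit_integral M \<phi> v j"
proof -
  have "\<bar>l * F y - m * F y\<bar> powr q = \<bar>l - m\<bar> powr q * enn2real (v y)" for y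
    using \<open>0 < q\<close> by (simp add: F_def abs_mult powr_mult powr_powr flip: left_diff_distrib)
  then have "orbit_integral M \<phi> (\<lambda>x. ennreal (\<bar>l * F x - m * F x\<bar> powr q)) j
      = (\<integral>\<^sup>+x. ennreal (\<bar>l - m\<bar> powr q) * ennreal (enn2real (v ((\<phi> ^^ j) x))) \<partial>M)"
    by (simp add: orbit_integral_def ennreal_mult)
  also have "\<dots> = ennreal (\<bar>l - m\<bar> powr q) * orbit_integral M \<phi> (\<lambda>x. ennreal (enn2real (v x))) j"
    unfolding orbit_integral_def by (rule nn_integral_cmult) (use \<phi> v in measurable)
  finally show ?thesis
    by (simp only: orbit_integral_enn2real[OF assms(1-3)])
qed

lemma upper_dens_enn2real_powr:
  fixes t :: "nat \<Rightarrow> ennreal"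
  assumes finite: "\<And>j. t j < \<infinity>" and "0 < q"
    and large: "\<And>R. upper_dens {j. ennreal R < t j} = 1"
    and small: "\<And>\<delta>. 0 < \<delta> \<Longrightarrow> upper_dens {j. t j < ennreal \<delta>} = 1"
  shows "upper_dens {j. R < enn2real (t j) powr (1 / q)} = 1"
    and "0 < \<delta> \<Longrightarrow> upper_dens {j. enn2real (t j) powr (1 / q) < \<delta>} = 1"
proof -
  note less_iff = enn2real_powr_less_iff[OF finite _ \<open>0 < q\<close>]
  have "0 < max R 0 + 1"
    by simp
  have "{j. ennreal ((max R 0 + 1) powr q) < t j} \<subseteq> {j. R < enn2real (t j) powr (1 / q)}"
  proof
    fix j assume "j \<in> {j. ennreal ((max R 0 + 1) powr q) < t j}"
    then have "\<not> enn2real (t j) powr (1 / q) < max R 0 + 1"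
      using less_iff[OF \<open>0 < max R 0 + 1\<close>] by simp
    then show "j \<in> {j. R < enn2real (t j) powr (1 / q)}"
      by simp
  qed
  with large show "upper_dens {j. R < enn2real (t j) powr (1 / q)} = 1"
    by (rule upper_dens_eq_1_mono)
  assume "0 < \<delta>"
  then have "{j. t j < ennreal (\<delta> powr q)} = {j. enn2real (t j) powr (1 / q) < \<delta>}"
    using less_iff by simp
  with small[of "\<delta> powr q"] \<open>0 < \<delta>\<close> show "upper_dens {j. enn2real (t j) powr (1 / q) < \<delta>} = 1"
    by simp
qed

lemma comp_op_distr_chaotic_LpI:
  assumes \<phi>: "\<phi> \<in> measurable M M" and c: "0 \<le> c"
    and preimage: "\<forall>B\<in>sets M. emeasure M (\<phi> -` B \<inter> space M) \<le> ennreal c * emeasure M B"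
    and "0 < q" and v[measurable]: "v \<in> borel_measurable M" and v0: "orbit_integral M \<phi> v 0 < \<infinity>"
    and large: "\<And>R. upper_dens {j. ennreal R < orbit_integral M \<phi> v j} = 1"
    and small: "\<And>\<delta>. 0 < \<delta> \<Longrightarrow> upper_dens {j. orbit_integral M \<phi> v j < ennreal \<delta>} = 1"
  shows "comp_op_distr_chaotic_Lp M q \<phi>"
proof -
  define F where "F x = enn2real (v x) powr (1 / q)" for x
  have v_finite: "orbit_integral M \<phi> v j < \<infinity>" for j
    using orbit_integral_finite[OF \<phi> c preimage v v0] .
  note integral_diff = orbit_integral_root_diff[OF \<phi> v v_finite \<open>0 < q\<close>, folded F_def]
  have segment: "(\<lambda>l y. l * F y) ` {0..1} \<subseteq> lp_space M q"
  proof safe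
    fix l :: real
    have "(\<integral>\<^sup>+x. ennreal (\<bar>l * F x\<bar> powr q) \<partial>M) = ennreal (\<bar>l\<bar> powr q) * orbit_integral M \<phi> v 0"
      using integral_diff[of l 0 0] by (simp add: orbit_integral_def)
    also have "\<dots> < \<infinity>"
      using v0 by (simp add: ennreal_mult_less_top)
    finally show "(\<lambda>y. l * F y) \<in> lp_space M q"
      unfolding lp_space_def F_def by simp
  qed
  show ?thesis
    unfolding comp_op_distr_chaotic_Lp_def
  proof (rule distr_chaotic_segmentI[OF segment])
    show "lp_norm M q (\<lambda>x. (comp_op \<phi> ^^ j) (\<lambda>y. l * F y) x - (comp_op \<phi> ^^ j) (\<lambda>y. m * F y) x)
        = \<bar>l - m\<bar> * enn2real (orbit_integral M \<phi> v j) powr (1 / q)" for l m j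
      using \<open>0 < q\<close>
      by (simp add: lp_norm_comp_op_funpow_diff integral_diff enn2real_mult powr_mult powr_powr)
  qed (use upper_dens_enn2real_powr[OF v_finite \<open>0 < q\<close> large small] in auto)
qed

lemma comp_op_distr_chaotic_Lp_transfer:
  assumes \<phi>: "\<phi> \<in> measurable M M" and "0 \<le> c"
    and preimage: "\<forall>B\<in>sets M. emeasure M (\<phi> -` B \<inter> space M) \<le> ennreal c * emeasure M B"
    and "0 < p" "0 < q" and "comp_op_distr_chaotic_Lp M p \<phi>"
  shows "comp_op_distr_chaotic_Lp M q \<phi>"
proof -
  obtain u e where u[measurable]: "u \<in> borel_measurable M"
    and "0 < e" and large: "upper_dens {j. ennreal e \<le> orbit_integral M \<phi> u j} = 1"
    and small: "\<And>\<delta>. 0 < \<delta> \<Longrightarrow> upper_dens {j. orbit_integral M \<phi> u j < ennreal \<delta>} = 1"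
    by (rule comp_op_distr_chaotic_LpE[OF \<phi> \<open>0 \<le> c\<close> preimage \<open>0 < p\<close> assms(6)]) (rule that)
  have preimage': "\<forall>B\<in>sets M. emeasure M (\<phi> -` B \<inter> space M) \<le> ennreal (max c 1) * emeasure M B"
  proof
    fix B assume "B \<in> sets M"
    have "ennreal c * emeasure M B \<le> ennreal (max c 1) * emeasure M B"
      by (intro mult_right_mono ennreal_leI) simp_all
    with preimage \<open>B \<in> sets M\<close> show "emeasure M (\<phi> -` B \<inter> space M) \<le> ennreal (max c 1) * emeasure M B"
      by (blast intro: order_trans)
  qed
  note growth = orbit_integral_add_le[OF \<phi> _ preimage' u]
  obtain w n where sum0: "(\<Sum>i. w i * orbit_integral M \<phi> u (n i)) < \<infinity>"
    and sum_large: "\<And>R. upper_dens {j. ennreal R < (\<Sum>i. w i * orbit_integral M \<phi> u (j + n i))} = 1"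
    and sum_small: "\<And>\<delta>. 0 < \<delta> \<Longrightarrow>
      upper_dens {j. (\<Sum>i. w i * orbit_integral M \<phi> u (j + n i)) < ennreal \<delta>} = 1"
    by (rule unbounded_shift_sumE[OF _ growth \<open>0 < e\<close> large small]) simp_all
  define v where "v x = (\<Sum>i. w i * u ((\<phi> ^^ n i) x))" for x
  have v: "v \<in> borel_measurable M"
    unfolding v_def using \<phi> by measurable
  have orbit_v: "orbit_integral M \<phi> v j = (\<Sum>i. w i * orbit_integral M \<phi> u (j + n i))" for j
    unfolding v_def by (rule orbit_integral_suminf[OF \<phi> u])
  show ?thesis
  proof (rule comp_op_distr_chaotic_LpI[OF \<phi> \<open>0 \<le> c\<close> preimage \<open>0 < q\<close> v])
    show "orbit_integral M \<phi> v 0 < \<infinity>"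
      using sum0 by (simp add: orbit_v)
    show "upper_dens {j. ennreal R < orbit_integral M \<phi> v j} = 1" for R
      using sum_large by (simp add: orbit_v)
    show "upper_dens {j. orbit_integral M \<phi> v j < ennreal \<delta>} = 1" if "0 < \<delta>" for \<delta>
      using sum_small[OF that] by (simp add: orbit_v)
  qed
qed

theorem mainTheorem2:
  fixes M :: "'a measure" and \<phi> :: "'a \<Rightarrow> 'a" and c p p' :: real
  assumes "sigma_finite_measure M"
    and "\<phi> \<in> measurable M M"
    and "c > 0"
    and "\<forall>B\<in>sets M. emeasure M (\<phi> -` B \<inter> space M) \<le> ennreal c * emeasure M B"
    and "1 \<le> p" and "1 \<le> p'"
  shows "comp_op_distr_chaotic_Lp M p \<phi> \<longleftrightarrow> comp_op_distr_chaotic_Lp M p' \<phi>"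
proof -
  note transfer = comp_op_distr_chaotic_Lp_transfer[OF assms(2) less_imp_le[OF assms(3)] assms(4)]
  show ?thesis
    using transfer[of p p'] transfer[of p' p] assms(5,6) by auto
qed

end
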